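(* Let $(X,d)$ be a complete metric space and let $(a_n)_{n\in\mathbb{N}^*}$ be a sequence of positive reals with $M:=\sup_{n\ge1}\frac{a_n}{a_{n-1}}<1$. Let $f:\ell_\infty(X)\to X$ satisfy one of the following: (i) $a_0L_{s,(a_n)}(f)<1$; (ii) $L_{p,(a_n)}(f)<\left(\frac{1-M}{a_0}\right)^{1/p}$ for some $p\in[1,\infty)$. Then $f$ has a generalized contractive fixed point.
   Context: $\mathbb{N}^*=\{0,1,2,\dots\}$; $\ell_\infty(X)$ is the set of all bounded sequences $(x_n)_{n\in\mathbb{N}^*}$ in $X$. $d_{s,(a_n)}(x,y):=\sup\{a_n d(x_n,y_n):n\in\mathbb{N}^*\}$ and $d_{p,(a_n)}(x,y):=\left(\sum_{n=0}^\infty a_n d^p(x_n,y_n)\right)^{1/p}$; $L_{s,(a_n)}(f)$, $L_{p,(a_n)}(f)$ are the Lipschitz constants of $f$ with respect to these metrics on $\ell_\infty(X)$ and $d$ on $X$. $\tilde f((x_n))=(f((x_n)),x_0,x_1,\dots)$; for $x\in\ell_\infty(X)$: $\tilde{x}^0:=x$, $x^k:=f(\tilde{x}^{k-1})$, $\tilde{x}^k:=\tilde f(\tilde{x}^{k-1})$ ($k\ge1$), and $(x^k)$ is the sequence of generalized iterates of $f$ at $x$. A point $x_*\in X$ with $f(x_*,x_*,\dots)=x_*$ is a generalized fixed point; it is a generalized contractive fixed point if for every $x\in\ell_\infty(X)$ the generalized iterates of $f$ at $x$ converge to $x_*$. *)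

theory Defs
  imports "HOL-Analysis.Analysis"
begin

definition linf :: "(nat \<Rightarrow> 'a::metric_space) set" where
  "linf = {x. bounded (range x)}"

definition d_s :: "(nat \<Rightarrow> real) \<Rightarrow> (nat \<Rightarrow> 'a::metric_space) \<Rightarrow> (nat \<Rightarrow> 'a) \<Rightarrow> real" where
  "d_s a x y = (SUP n. a n * dist (x n) (y n))"

definition d_p :: "real \<Rightarrow> (nat \<Rightarrow> real) \<Rightarrow> (nat \<Rightarrow> 'a::metric_space) \<Rightarrow> (nat \<Rightarrow> 'a) \<Rightarrow> real" where
  "d_p p a x y = (\<Sum>n. a n * dist (x n) (y n) powr p) powr (1 / p)"

definition lip_const :: "((nat \<Rightarrow> 'a) \<Rightarrow> (nat \<Rightarrow> 'a) \<Rightarrow> real) \<Rightarrow> ((nat \<Rightarrow> 'a::metric_space) \<Rightarrow> 'a) \<Rightarrow> ereal" where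
  "lip_const D f = (SUP xy \<in> {(x, y). x \<in> linf \<and> y \<in> linf \<and> x \<noteq> y}.
                      ereal (dist (f (fst xy)) (f (snd xy)) / D (fst xy) (snd xy)))"

definition L_s :: "(nat \<Rightarrow> real) \<Rightarrow> ((nat \<Rightarrow> 'a::metric_space) \<Rightarrow> 'a) \<Rightarrow> ereal" where
  "L_s a f = lip_const (d_s a) f"

definition L_p :: "real \<Rightarrow> (nat \<Rightarrow> real) \<Rightarrow> ((nat \<Rightarrow> 'a::metric_space) \<Rightarrow> 'a) \<Rightarrow> ereal" where
  "L_p p a f = lip_const (d_p p a) f"

definition ftilde :: "((nat \<Rightarrow> 'a) \<Rightarrow> 'a) \<Rightarrow> (nat \<Rightarrow> 'a) \<Rightarrow> (nat \<Rightarrow> 'a)" where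
  "ftilde f x = case_nat (f x) x"

text \<open>Generalized iterates: x^k = f(tilde x^(k-1)) for k >= 1, where tilde x^0 = x and
  tilde x^k = tilde f (tilde x^(k-1)). (The value at k = 0 is irrelevant for convergence.)\<close>
definition gen_iterate :: "((nat \<Rightarrow> 'a) \<Rightarrow> 'a) \<Rightarrow> (nat \<Rightarrow> 'a) \<Rightarrow> nat \<Rightarrow> 'a" where
  "gen_iterate f x k = f ((ftilde f ^^ (k - 1)) x)"

definition gen_fixed_point :: "((nat \<Rightarrow> 'a) \<Rightarrow> 'a) \<Rightarrow> 'a \<Rightarrow> bool" where
  "gen_fixed_point f xs \<longleftrightarrow> f (\<lambda>_. xs) = xs"

definition gen_contractive_fixed_point :: "((nat \<Rightarrow> 'a::metric_space) \<Rightarrow> 'a) \<Rightarrow> 'a \<Rightarrow> bool" where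
  "gen_contractive_fixed_point f xs \<longleftrightarrow>
     gen_fixed_point f xs \<and> (\<forall>x \<in> linf. gen_iterate f x \<longlonglongrightarrow> xs)"

end

theory Submission
  imports Defs
begin

(* Either condition yields a weighted metric D on bounded sequences and a constant r with
   dist (f x) (f y) <= r D x y.  The diagonal map z |-> f (z, z, ...) is then a Banach contraction
   with a fixed point c, and the shift map ftilde f x = (f x, x_0, x_1, ...) is a D-contraction:
   the new head contributes a_0 r D, the shifted tail at most M D (for d_p in p-th powers).
   As ftilde f fixes the constant sequence at c, the distance D from the k-th shift of x to it
   decays geometrically, and it bounds dist (x^(k+1)) c up to the factor r. *)

lemma linf_dist_bounded:
  assumes "x \<in> linf" "y \<in> linf"
  obtains B where "0 \<le> B" "\<And>n. dist (x n) (y n) \<le> B"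
proof -
  have "bounded (range x \<union> range y)" using assms by (simp add: linf_def)
  then obtain B where "\<And>u v. u \<in> range x \<union> range y \<Longrightarrow> v \<in> range x \<union> range y \<Longrightarrow> dist u v \<le> B"
    by (meson bounded_two_points)
  then show ?thesis by (intro that[of "max 0 B"]) (auto simp: le_max_iff_disj)
qed

lemma linf_const: "(\<lambda>_. c) \<in> linf"
  by (simp add: linf_def)

lemma linf_case_nat: "y \<in> linf \<Longrightarrow> case_nat v y \<in> linf"
proof -
  assume "y \<in> linf"
  then have "bounded (insert v (range y))" by (simp add: linf_def)
  moreover have "range (case_nat v y) \<subseteq> insert v (range y)" by (auto split: nat.splits)
  ultimately show ?thesis unfolding linf_def using bounded_subset by blast
qed

lemma linf_funpow_ftilde: "x \<in> linf \<Longrightarrow> (ftilde f ^^ k) x \<in> linf"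
  by (induction k) (auto simp: ftilde_def linf_case_nat)

lemma dist_le_lip_const:
  assumes "lip_const D f \<le> ereal r" "0 \<le> r" "x \<in> linf" "y \<in> linf"
    and "0 \<le> D x y" and D_pos: "x \<noteq> y \<Longrightarrow> 0 < D x y"
  shows "dist (f x) (f y) \<le> r * D x y"
proof (cases "x = y")
  case False
  then have "ereal (dist (f x) (f y) / D x y) \<le> lip_const D f"
    unfolding lip_const_def using assms(3,4) by (intro SUP_upper2[of "(x, y)"]) auto
  with assms(1) have "dist (f x) (f y) / D x y \<le> r" using order_trans ereal_less_eq(3) by blast
  with D_pos[OF False] show ?thesis by (simp add: divide_le_eq mult.commute)
qed (use assms in simp)

lemma ereal_less_imp_le_real:
  assumes "L < ereal C" "0 < C"
  obtains r where "0 \<le> r" "r < C" "L \<le> ereal r"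
proof (cases L)
  case (real l)
  with assms show ?thesis by (intro that[of "max 0 l"]) auto
qed (use assms in \<open>auto intro: that[of 0]\<close>)

lemma ex_gen_fixed_point:
  fixes f :: "(nat \<Rightarrow> 'a::complete_space) \<Rightarrow> 'a"
  assumes lip: "\<And>y z. y \<in> linf \<Longrightarrow> z \<in> linf \<Longrightarrow> dist (f y) (f z) \<le> r * D y z"
    and D_const: "\<And>u v. D (\<lambda>_. u) (\<lambda>_. v) \<le> K * dist u v"
    and "0 \<le> r" "0 \<le> K" "r * K < 1"
  shows "\<exists>xs. gen_fixed_point f xs"
proof -
  have "dist (f (\<lambda>_. u)) (f (\<lambda>_. v)) \<le> r * K * dist u v" for u v
  proof -
    have "dist (f (\<lambda>_. u)) (f (\<lambda>_. v)) \<le> r * D (\<lambda>_. u) (\<lambda>_. v)"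
      by (intro lip linf_const)
    also have "\<dots> \<le> r * (K * dist u v)" using D_const \<open>0 \<le> r\<close> by (rule mult_left_mono)
    finally show ?thesis by simp
  qed
  then have "\<exists>!xs. f (\<lambda>_. xs) = xs"
    using assms(3-5) by (intro banach_fix_type[of "r * K"]) auto
  then show ?thesis by (auto simp: gen_fixed_point_def)
qed

lemma gen_contractive_fixed_point_if_ftilde_contraction:
  assumes fixed: "gen_fixed_point f xs"
    and lip: "\<And>y z. y \<in> linf \<Longrightarrow> z \<in> linf \<Longrightarrow> dist (f y) (f z) \<le> r * D y z"
    and contr: "\<And>y z. y \<in> linf \<Longrightarrow> z \<in> linf \<Longrightarrow> D (ftilde f y) (ftilde f z) \<le> q * D y z"
    and "0 \<le> r" "0 \<le> q" "q < 1"
  shows "gen_contractive_fixed_point f xs"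
proof -
  define c where "c = (\<lambda>_::nat. xs)"
  have "ftilde f c = c"
    using fixed by (auto simp: ftilde_def c_def gen_fixed_point_def fun_eq_iff split: nat.split)
  then have Tk_c: "(ftilde f ^^ k) c = c" for k by (induction k) auto
  have "gen_iterate f x \<longlonglongrightarrow> xs" if x: "x \<in> linf" for x
  proof -
    have decay: "D ((ftilde f ^^ k) x) c \<le> q ^ k * D x c" for k
    proof (induction k)
      case (Suc k)
      have "D ((ftilde f ^^ Suc k) x) c = D (ftilde f ((ftilde f ^^ k) x)) (ftilde f c)"
        using \<open>ftilde f c = c\<close> by (simp only: funpow.simps comp_apply)
      also have "\<dots> \<le> q * D ((ftilde f ^^ k) x) c"
        by (intro contr linf_funpow_ftilde x) (simp add: c_def linf_const)
      also have "\<dots> \<le> q * (q ^ k * D x c)" using Suc.IH \<open>0 \<le> q\<close> by (rule mult_left_mono)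
      finally show ?case by simp
    qed simp
    have bound: "dist (gen_iterate f x (Suc k)) xs \<le> r * D x c * q ^ k" for k
    proof -
      have "dist (gen_iterate f x (Suc k)) xs = dist (f ((ftilde f ^^ k) x)) (f c)"
        using fixed by (simp add: gen_iterate_def gen_fixed_point_def c_def)
      also have "\<dots> \<le> r * D ((ftilde f ^^ k) x) c"
        by (intro lip linf_funpow_ftilde x) (simp add: c_def linf_const)
      also have "\<dots> \<le> r * (q ^ k * D x c)" using decay \<open>0 \<le> r\<close> by (rule mult_left_mono)
      finally show ?thesis by (simp add: ac_simps)
    qed
    have "(\<lambda>k. r * D x c * q ^ k) \<longlonglongrightarrow> 0"
      using assms(5,6) by (intro tendsto_mult_right_zero LIMSEQ_power_zero) simp
    then have "(\<lambda>k. dist (gen_iterate f x (Suc k)) xs) \<longlonglongrightarrow> 0"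
    proof (rule Lim_null_comparison[rotated])
      show "\<forall>\<^sub>F k in sequentially. norm (dist (gen_iterate f x (Suc k)) xs) \<le> r * D x c * q ^ k"
        using bound by (simp add: always_eventually)
    qed
    then have "(\<lambda>k. gen_iterate f x (Suc k)) \<longlonglongrightarrow> xs" by (rule tendsto_dist_iff[THEN iffD2])
    then show ?thesis by (rule LIMSEQ_imp_Suc)
  qed
  with fixed show ?thesis by (simp add: gen_contractive_fixed_point_def)
qed

lemma weight_le_first:
  fixes a :: "nat \<Rightarrow> real"
  assumes "\<And>n. 0 \<le> a n" "\<And>n. a (Suc n) \<le> M * a n" "M \<le> 1"
  shows "a n \<le> a 0"
proof -
  have "a (Suc n) \<le> a n" for n
    using assms(2)[of n] mult_right_mono[OF assms(3) assms(1)[of n]] by linarith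
  then show ?thesis by (induction n) (auto intro: order_trans)
qed

lemma d_s_bdd_above:
  assumes "\<And>n. 0 \<le> a n" "\<And>n. a n \<le> a 0" "x \<in> linf" "y \<in> linf"
  shows "bdd_above (range (\<lambda>n. a n * dist (x n) (y n)))"
proof -
  obtain B where "0 \<le> B" "\<And>n. dist (x n) (y n) \<le> B"
    using linf_dist_bounded[OF assms(3,4)] by blast
  then have "a n * dist (x n) (y n) \<le> a 0 * B" for n
    using assms(1,2) by (intro mult_mono) auto
  then show ?thesis by (intro bdd_aboveI2)
qed

lemma d_s_ge:
  assumes "\<And>n. 0 \<le> a n" "\<And>n. a n \<le> a 0" "x \<in> linf" "y \<in> linf"
  shows "a n * dist (x n) (y n) \<le> d_s a x y"
  unfolding d_s_def using assms by (intro cSUP_upper d_s_bdd_above) auto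

lemma d_s_nonneg:
  assumes "\<And>n. 0 \<le> a n" "\<And>n. a n \<le> a 0" "x \<in> linf" "y \<in> linf"
  shows "0 \<le> d_s a x y"
  using d_s_ge[of a x y 0] assms by (meson order_trans zero_le_dist zero_le_mult_iff)

lemma d_s_pos:
  assumes "\<And>n. 0 < a n" "\<And>n. a n \<le> a 0" "x \<in> linf" "y \<in> linf" "x \<noteq> y"
  shows "0 < d_s a x y"
proof -
  obtain n where "x n \<noteq> y n" using \<open>x \<noteq> y\<close> by blast
  then have "0 < a n * dist (x n) (y n)" using assms(1)[of n] by simp
  also have "\<dots> \<le> d_s a x y" using assms(1-4) by (intro d_s_ge) (auto intro: less_imp_le)
  finally show ?thesis .
qed

lemma d_s_const_le:
  assumes "\<And>n. 0 \<le> a n" "\<And>n. a n \<le> a 0"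
  shows "d_s a (\<lambda>_. u) (\<lambda>_. v) \<le> a 0 * dist u v"
  unfolding d_s_def using assms by (intro cSUP_least) (auto intro: mult_right_mono)

lemma d_s_case_nat_le:
  assumes "\<And>n. 0 \<le> a n" "\<And>n. a n \<le> a 0" "\<And>n. a (Suc n) \<le> M * a n" "0 \<le> M"
    and "y \<in> linf" "z \<in> linf"
  shows "d_s a (case_nat u y) (case_nat v z) \<le> max (a 0 * dist u v) (M * d_s a y z)"
  unfolding d_s_def[of a "case_nat u y"]
proof (rule cSUP_least)
  fix n
  show "a n * dist (case_nat u y n) (case_nat v z n) \<le> max (a 0 * dist u v) (M * d_s a y z)"
  proof (cases n)
    case (Suc m)
    have "a (Suc m) * dist (y m) (z m) \<le> M * (a m * dist (y m) (z m))"
      using mult_right_mono[OF assms(3)[of m] zero_le_dist[of "y m" "z m"]] by (simp add: ac_simps)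
    also have "\<dots> \<le> M * d_s a y z" using assms by (intro mult_left_mono d_s_ge) auto
    finally show ?thesis using Suc by simp
  qed simp
qed simp

lemma d_s_ftilde_le:
  assumes "\<And>n. 0 \<le> a n" "\<And>n. a n \<le> a 0" "\<And>n. a (Suc n) \<le> M * a n" "0 \<le> M" "0 \<le> r"
    and lip: "\<And>y z. y \<in> linf \<Longrightarrow> z \<in> linf \<Longrightarrow> dist (f y) (f z) \<le> r * d_s a y z"
    and "y \<in> linf" "z \<in> linf"
  shows "d_s a (ftilde f y) (ftilde f z) \<le> max (a 0 * r) M * d_s a y z"
proof -
  have "d_s a (ftilde f y) (ftilde f z) \<le> max (a 0 * dist (f y) (f z)) (M * d_s a y z)"
    unfolding ftilde_def using assms(1-4,7,8) by (rule d_s_case_nat_le)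
  also have "\<dots> \<le> max (a 0 * (r * d_s a y z)) (M * d_s a y z)"
    using lip[OF assms(7,8)] assms(1)[of 0] \<open>0 \<le> M\<close> by (intro max.mono mult_left_mono) auto
  also have "\<dots> = max (a 0 * r) M * d_s a y z"
    using d_s_nonneg[of a, OF assms(1,2,7,8)] by (simp add: max_mult_distrib_right)
  finally show ?thesis .
qed

lemma ex_gen_contractive_fixed_point_d_s:
  fixes f :: "(nat \<Rightarrow> 'a::complete_space) \<Rightarrow> 'a"
  assumes a_pos: "\<And>n. 0 < a n" and a_ratio: "\<And>n. a (Suc n) \<le> M * a n"
    and "0 \<le> M" "M < 1"
    and L_s_lt: "ereal (a 0) * L_s a f < 1"
  shows "\<exists>xs. gen_contractive_fixed_point f xs"
proof -
  have a_nonneg: "0 \<le> a n" for n using a_pos[of n] by simp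
  have "L_s a f < ereal (1 / a 0)"
    using L_s_lt a_pos[of 0] by (cases "L_s a f") (auto simp: field_simps)
  then obtain r where L: "lip_const (d_s a) f \<le> ereal r" and "0 \<le> r" "a 0 * r < 1"
    using a_pos[of 0] by (auto simp: L_s_def field_simps elim: ereal_less_imp_le_real)
  have a_le: "a n \<le> a 0" for n using a_nonneg a_ratio \<open>M < 1\<close> by (intro weight_le_first) auto
  note d_s_props = d_s_nonneg[of a, OF a_nonneg a_le] d_s_pos[of a, OF a_pos a_le]
  have lip: "dist (f y) (f z) \<le> r * d_s a y z" if "y \<in> linf" "z \<in> linf" for y z
    using L \<open>0 \<le> r\<close> that by (rule dist_le_lip_const) (use d_s_props that in auto)
  have "\<exists>xs. gen_fixed_point f xs"
    using lip d_s_const_le[of a, OF a_nonneg a_le] \<open>0 \<le> r\<close> a_nonneg[of 0] \<open>a 0 * r < 1\<close>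
    by (intro ex_gen_fixed_point[of f r "d_s a" "a 0"]) (auto simp: mult.commute)
  then obtain xs where xs: "gen_fixed_point f xs" ..
  have "d_s a (ftilde f y) (ftilde f z) \<le> max (a 0 * r) M * d_s a y z"
    if "y \<in> linf" "z \<in> linf" for y z
    using a_nonneg a_le a_ratio \<open>0 \<le> M\<close> \<open>0 \<le> r\<close> lip that by (rule d_s_ftilde_le)
  with xs lip \<open>0 \<le> r\<close> \<open>0 \<le> M\<close> \<open>M < 1\<close> \<open>a 0 * r < 1\<close>
  have "gen_contractive_fixed_point f xs"
    by (intro gen_contractive_fixed_point_if_ftilde_contraction[where q = "max (a 0 * r) M"]) auto
  then show ?thesis ..
qed

lemma weight_summable_le_geometric:
  fixes a :: "nat \<Rightarrow> real"
  assumes a_nonneg: "\<And>n. 0 \<le> a n" and a_ratio: "\<And>n. a (Suc n) \<le> M * a n"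
    and "0 \<le> M" "M < 1"
  shows "summable a" and "suminf a \<le> a 0 / (1 - M)"
proof -
  have a_le: "a n \<le> a 0 * M ^ n" for n
  proof (induction n)
    case (Suc n)
    have "a (Suc n) \<le> M * a n" by (rule a_ratio)
    also have "\<dots> \<le> M * (a 0 * M ^ n)" using Suc.IH \<open>0 \<le> M\<close> by (rule mult_left_mono)
    finally show ?case by (simp add: ac_simps)
  qed simp
  have geom: "summable (\<lambda>n. a 0 * M ^ n)"
    using assms(3,4) by (intro summable_mult summable_geometric) auto
  show "summable a"
    using a_nonneg a_le by (intro summable_comparison_test'[OF geom, of 0]) auto
  then have "suminf a \<le> (\<Sum>n. a 0 * M ^ n)" using a_le geom by (intro suminf_le)
  also have "\<dots> = a 0 / (1 - M)"
    using assms(3,4) by (simp add: suminf_mult suminf_geometric)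
  finally show "suminf a \<le> a 0 / (1 - M)" .
qed

lemma d_p_summable:
  fixes a :: "nat \<Rightarrow> real"
  assumes "summable a" "\<And>n. 0 \<le> a n" "0 \<le> p" "x \<in> linf" "y \<in> linf"
  shows "summable (\<lambda>n. a n * dist (x n) (y n) powr p)"
proof -
  obtain B where "0 \<le> B" "\<And>n. dist (x n) (y n) \<le> B"
    using linf_dist_bounded[OF assms(4,5)] by blast
  then have "norm (a n * dist (x n) (y n) powr p) \<le> a n * B powr p" for n
    using assms(2)[of n] \<open>0 \<le> p\<close> by (simp add: mult_left_mono powr_mono2)
  then show ?thesis by (rule summable_comparison_test'[OF summable_mult2[OF \<open>summable a\<close>]])
qed

lemma d_p_nonneg: "0 \<le> d_p p a x y"
  by (simp add: d_p_def)

lemma d_p_powr: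
  fixes a :: "nat \<Rightarrow> real"
  assumes "summable a" "\<And>n. 0 \<le> a n" "0 < p" "x \<in> linf" "y \<in> linf"
  shows "d_p p a x y powr p = (\<Sum>n. a n * dist (x n) (y n) powr p)"
proof -
  have "0 \<le> (\<Sum>n. a n * dist (x n) (y n) powr p)"
    using assms by (intro suminf_nonneg d_p_summable) auto
  with \<open>0 < p\<close> show ?thesis by (simp add: d_p_def powr_powr)
qed

lemma d_p_pos:
  fixes a :: "nat \<Rightarrow> real"
  assumes "summable a" "\<And>n. 0 < a n" "0 < p" "x \<in> linf" "y \<in> linf" "x \<noteq> y"
  shows "0 < d_p p a x y"
proof -
  obtain n where "x n \<noteq> y n" using \<open>x \<noteq> y\<close> by blast
  then have "0 < a n * dist (x n) (y n) powr p" using assms(2)[of n] by simp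
  then have "0 < (\<Sum>n. a n * dist (x n) (y n) powr p)"
    using assms by (intro suminf_pos2 d_p_summable) (auto simp: less_imp_le)
  then show ?thesis by (simp add: d_p_def)
qed

lemma d_p_const:
  fixes a :: "nat \<Rightarrow> real"
  assumes "summable a" "\<And>n. 0 \<le> a n" "0 < p"
  shows "d_p p a (\<lambda>_. u) (\<lambda>_. v) = suminf a powr (1 / p) * dist u v"
proof -
  have "d_p p a (\<lambda>_. u) (\<lambda>_. v) = (suminf a * dist u v powr p) powr (1 / p)"
    using suminf_mult2[OF \<open>summable a\<close>] by (simp add: d_p_def)
  also have "\<dots> = suminf a powr (1 / p) * dist u v"
    using assms by (simp add: powr_mult powr_powr suminf_nonneg)
  finally show ?thesis .
qed

lemma d_p_case_nat_powr_le:
  fixes a :: "nat \<Rightarrow> real"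
  assumes "summable a" "\<And>n. 0 \<le> a n" "\<And>n. a (Suc n) \<le> M * a n" "0 < p"
    and "y \<in> linf" "z \<in> linf"
  shows "d_p p a (case_nat u y) (case_nat v z) powr p \<le> a 0 * dist u v powr p + M * d_p p a y z powr p"
proof -
  define g where "g n = a n * dist (case_nat u y n) (case_nat v z n) powr p" for n
  have "summable g"
    unfolding g_def using assms by (intro d_p_summable linf_case_nat) auto
  then have summable_tail: "summable (\<lambda>n. a (Suc n) * dist (y n) (z n) powr p)"
    by (subst (asm) summable_Suc_iff[symmetric]) (simp add: g_def)
  have summable_yz: "summable (\<lambda>n. a n * dist (y n) (z n) powr p)"
    using assms by (intro d_p_summable) auto
  have "(\<Sum>n. a (Suc n) * dist (y n) (z n) powr p) \<le> (\<Sum>n. M * (a n * dist (y n) (z n) powr p))"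
    using summable_tail summable_mult[OF summable_yz] assms(3)
    by (intro suminf_le) (auto simp: mult.assoc[symmetric] intro: mult_right_mono)
  also have "\<dots> = M * (\<Sum>n. a n * dist (y n) (z n) powr p)"
    by (rule suminf_mult[OF summable_yz])
  finally have tail: "(\<Sum>n. a (Suc n) * dist (y n) (z n) powr p) \<le> M * (\<Sum>n. a n * dist (y n) (z n) powr p)" .
  have "d_p p a (case_nat u y) (case_nat v z) powr p = suminf g"
    unfolding g_def using assms by (intro d_p_powr linf_case_nat) auto
  also have "\<dots> = g 0 + (\<Sum>n. g (Suc n))"
    using suminf_split_head[OF \<open>summable g\<close>] by simp
  also have "\<dots> \<le> a 0 * dist u v powr p + M * d_p p a y z powr p"
    using tail assms by (simp add: g_def d_p_powr)
  finally show ?thesis .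
qed

lemma le_mult_root_if_powr_le:
  fixes x y c p :: real
  assumes "0 < p" "0 \<le> x" "0 \<le> y" "0 \<le> c" "x powr p \<le> c * y powr p"
  shows "x \<le> c powr (1 / p) * y"
proof -
  have "x = (x powr p) powr (1 / p)" using assms by (simp add: powr_powr)
  also have "\<dots> \<le> (c * y powr p) powr (1 / p)" using assms by (intro powr_mono2) auto
  also have "\<dots> = c powr (1 / p) * y" using assms by (simp add: powr_mult powr_powr)
  finally show ?thesis .
qed

lemma d_p_ftilde_le:
  fixes a :: "nat \<Rightarrow> real"
  assumes "summable a" "\<And>n. 0 \<le> a n" "\<And>n. a (Suc n) \<le> M * a n" "0 \<le> M" "0 < p" "0 \<le> r"
    and lip: "\<And>y z. y \<in> linf \<Longrightarrow> z \<in> linf \<Longrightarrow> dist (f y) (f z) \<le> r * d_p p a y z"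
    and "y \<in> linf" "z \<in> linf"
  shows "d_p p a (ftilde f y) (ftilde f z) \<le> (a 0 * r powr p + M) powr (1 / p) * d_p p a y z"
proof -
  have "d_p p a (ftilde f y) (ftilde f z) powr p \<le> a 0 * dist (f y) (f z) powr p + M * d_p p a y z powr p"
    unfolding ftilde_def using assms(1-3,5,8,9) by (rule d_p_case_nat_powr_le)
  also have "\<dots> \<le> a 0 * (r * d_p p a y z) powr p + M * d_p p a y z powr p"
    using lip[OF assms(8,9)] assms(2)[of 0] \<open>0 < p\<close> by (intro add_right_mono mult_left_mono powr_mono2) auto
  also have "\<dots> = (a 0 * r powr p + M) * d_p p a y z powr p"
    using \<open>0 \<le> r\<close> by (simp add: powr_mult algebra_simps)
  finally show ?thesis
    using assms(2)[of 0] \<open>0 < p\<close> \<open>0 \<le> r\<close> \<open>0 \<le> M\<close>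
    by (intro le_mult_root_if_powr_le) (auto simp: d_p_nonneg)
qed

lemma ex_gen_contractive_fixed_point_d_p:
  fixes f :: "(nat \<Rightarrow> 'a::complete_space) \<Rightarrow> 'a"
  assumes a_pos: "\<And>n. 0 < a n" and a_ratio: "\<And>n. a (Suc n) \<le> M * a n"
    and "0 \<le> M" "M < 1" "0 < p"
    and L_p_lt: "L_p p a f < ereal (((1 - M) / a 0) powr (1 / p))"
  shows "\<exists>xs. gen_contractive_fixed_point f xs"
proof -
  have a_nonneg: "0 \<le> a n" for n using a_pos[of n] by simp
  have "0 < a 0" "0 < 1 - M" using a_pos \<open>M < 1\<close> by auto
  then obtain r where L: "lip_const (d_p p a) f \<le> ereal r"
    and "0 \<le> r" and r_lt: "r < ((1 - M) / a 0) powr (1 / p)"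
    using L_p_lt by (auto simp: L_p_def elim: ereal_less_imp_le_real)
  note weights = a_nonneg a_ratio \<open>0 \<le> M\<close> \<open>M < 1\<close>
  have a_summable: "summable a" by (rule weight_summable_le_geometric(1)[of a, OF weights])
  have "r powr p < (((1 - M) / a 0) powr (1 / p)) powr p"
    using \<open>0 < p\<close> \<open>0 \<le> r\<close> r_lt by (rule powr_less_mono2)
  then have ar: "a 0 * r powr p + M < 1"
    using \<open>0 < p\<close> \<open>0 < a 0\<close> \<open>0 < 1 - M\<close> by (simp add: powr_powr field_simps)
  have lip: "dist (f y) (f z) \<le> r * d_p p a y z" if "y \<in> linf" "z \<in> linf" for y z
    using L \<open>0 \<le> r\<close> that by (rule dist_le_lip_const)
      (use a_summable a_pos \<open>0 < p\<close> that in \<open>auto simp: d_p_nonneg d_p_pos less_imp_le\<close>)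
  have "r * suminf a powr (1 / p) \<le> r * (a 0 / (1 - M)) powr (1 / p)"
    using weight_summable_le_geometric(2)[of a, OF weights] \<open>0 \<le> r\<close> \<open>0 < p\<close> a_summable a_nonneg
    by (intro mult_left_mono powr_mono2 suminf_nonneg) auto
  also have "\<dots> < ((1 - M) / a 0) powr (1 / p) * (a 0 / (1 - M)) powr (1 / p)"
    using r_lt \<open>0 < a 0\<close> \<open>0 < 1 - M\<close> by (intro mult_strict_right_mono) auto
  also have "\<dots> = 1"
    using \<open>0 < a 0\<close> \<open>0 < 1 - M\<close> by (simp flip: powr_mult)
  finally have "\<exists>xs. gen_fixed_point f xs"
    using lip d_p_const[OF a_summable a_nonneg \<open>0 < p\<close>, THEN eq_refl] \<open>0 \<le> r\<close>
    by (intro ex_gen_fixed_point[of f r "d_p p a" "suminf a powr (1 / p)"]) auto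
  then obtain xs where xs: "gen_fixed_point f xs" ..
  define q where "q = (a 0 * r powr p + M) powr (1 / p)"
  have "q < 1 powr (1 / p)"
    unfolding q_def using ar \<open>0 < p\<close> \<open>0 \<le> M\<close> a_nonneg[of 0] by (intro powr_less_mono2) auto
  then have "q < 1" by simp
  have "d_p p a (ftilde f y) (ftilde f z) \<le> q * d_p p a y z" if "y \<in> linf" "z \<in> linf" for y z
    unfolding q_def using a_summable a_nonneg a_ratio \<open>0 \<le> M\<close> \<open>0 < p\<close> \<open>0 \<le> r\<close> lip that
    by (rule d_p_ftilde_le)
  with xs lip \<open>0 \<le> r\<close> \<open>q < 1\<close> have "gen_contractive_fixed_point f xs"
    by (intro gen_contractive_fixed_point_if_ftilde_contraction[where q = q]) (auto simp: q_def)
  then show ?thesis ..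
qed

theorem mainTheorem13:
  fixes f :: "(nat \<Rightarrow> 'a::complete_space) \<Rightarrow> 'a"
    and a :: "nat \<Rightarrow> real"
    and M :: real
  assumes a_pos: "\<And>n. a n > 0"
    and M_bdd: "bdd_above (range (\<lambda>n. a (Suc n) / a n))"
    and M_def: "M = (SUP n. a (Suc n) / a n)"
    and M_lt1: "M < 1"
    and cond: "ereal (a 0) * L_s a f < 1 \<or>
               (\<exists>p::real. p \<ge> 1 \<and> L_p p a f < ereal (((1 - M) / a 0) powr (1 / p)))"
  shows "\<exists>xs. gen_contractive_fixed_point f xs"
proof -
  have ratio_le: "a (Suc n) / a n \<le> M" for n
    unfolding M_def using M_bdd by (rule cSUP_upper[rotated]) simp
  then have a_ratio: "a (Suc n) \<le> M * a n" for n
    using a_pos[of n] by (simp add: divide_le_eq)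
  have "0 < a (Suc 0) / a 0" using a_pos[of 0] a_pos[of 1] by simp
  with ratio_le[of 0] have "0 \<le> M" by linarith
  from cond show ?thesis
  proof
    assume "ereal (a 0) * L_s a f < 1"
    with a_pos a_ratio \<open>0 \<le> M\<close> M_lt1 show ?thesis
      by (rule ex_gen_contractive_fixed_point_d_s)
  next
    assume "\<exists>p::real. p \<ge> 1 \<and> L_p p a f < ereal (((1 - M) / a 0) powr (1 / p))"
    then obtain p :: real where "1 \<le> p" "L_p p a f < ereal (((1 - M) / a 0) powr (1 / p))"
      by blast
    with a_pos a_ratio \<open>0 \<le> M\<close> M_lt1 show ?thesis
      by (intro ex_gen_contractive_fixed_point_d_p[where p = p]) auto
  qed
qed

end
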